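(* Assume $\Sigma_1=\sigma_1^2\mathbf I_K$ with $\sigma_1>0$, and let $\nu_2>0$. Then for every $(\mathbf t,\mathbf c(\mathbf t))\in\mathcal A_K(\alpha_0)$, $$\omega_K\{\mathbf 0,\Sigma_1,\nu_2,\mathbf t,\mathbf c(\mathbf t)\}\le\omega_K\{\mathbf 0,\Sigma_1,\nu_2,\mathbf 0,\mathbf c^*\}.$$ That is, at $\boldsymbol\theta=\mathbf 0$ the multivariate cTOST is the most powerful among all tests defined by pairs in $\mathcal A_K(\alpha_0)$.
   Context: Multivariate setting. Fix an integer $K\ge2$, $c_0>0$, $\alpha_0\in(0,1/2)$, $\nu_2>0$, and a positive definite $K\times K$ matrix $\Sigma_1$ with diagonal entries $\sigma_{1,k}^2$. Let $\widehat{\boldsymbol\theta}\sim\mathcal N_K(\boldsymbol\theta,\Sigma_1)$ and $\widehat\Sigma_1$ be independent with $\nu_2\widehat\Sigma_1\sim W_K(\Sigma_1,\nu_2)$ (Wishart), and let $\widehat\sigma_{1,k}$ be the square root of the $k$th diagonal entry of $\widehat\Sigma_1$. For $\mathbf t\in[0,\infty)^K$, $\mathbf c\in(0,\infty)^K$ define $$\omega_K(\boldsymbol\theta,\Sigma_1,\nu_2,\mathbf t,\mathbf c)=\Pr\Big(\bigcap_{k=1}^K\{t_k\widehat\sigma_{1,k}-c_k<\widehat\theta_k<c_k-t_k\widehat\sigma_{1,k}\}\Big).$$ The marginal (univariate) rejection probability is $\omega(\theta,s,\nu_2,t,c)=\Pr(t\widehat\sigma-c<\widehat\theta<c-t\widehat\sigma)$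 for independent $\widehat\theta\sim\mathcal N(\theta,s^2)$, $\nu_2\widehat\sigma^2/s^2\sim\chi^2_{\nu_2}$. Define $\mathcal A_K(\alpha_0)$ as the set of pairs $(\mathbf t,\mathbf c)$ with $\mathbf t\in[0,\infty)^K$, $\mathbf c\in(0,\infty)^K$, $\sup_{\boldsymbol\theta\notin(-c_0,c_0)^K}\omega_K(\boldsymbol\theta,\Sigma_1,\nu_2,\mathbf t,\mathbf c)=\alpha_0$, and $\omega(c_0,\sigma_{1,1},\nu_2,t_1,c_1)=\cdots=\omega(c_0,\sigma_{1,K},\nu_2,t_K,c_K)$ (equal marginal sizes). For fixed $\mathbf t$, $\mathbf c(\mathbf t)=(c_1(\mathbf t),\ldots,c_K(\mathbf t))$ denotes the unique $\mathbf c$ with $(\mathbf t,\mathbf c)\in\mathcal A_K(\alpha_0)$. The multivariate cTOST corresponds to $\mathbf t=\mathbf 0$ and $\mathbf c^*:=\mathbf c(\mathbf 0)$. *)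

theory Defs
  imports "HOL-Probability.Probability"
begin

definition chisq_density :: "real \<Rightarrow> real \<Rightarrow> real" where
  "chisq_density nu x =
     (if x \<le> 0 then 0
      else x powr (nu / 2 - 1) * exp (- x / 2) / (2 powr (nu / 2) * Gamma (nu / 2)))"

definition sigma_hat_distr :: "real \<Rightarrow> real \<Rightarrow> real measure" where
  "sigma_hat_distr s nu =
     distr (density lborel (\<lambda>x. ennreal (chisq_density nu x))) borel
           (\<lambda>x. sqrt (s\<^sup>2 * x / nu))"

definition coord_distr :: "real \<Rightarrow> real \<Rightarrow> real \<Rightarrow> (real \<times> real) measure" where
  "coord_distr theta s nu =
     density lborel (\<lambda>x. ennreal (normal_density theta s x)) \<Otimes>\<^sub>M sigma_hat_distr s nu"

definition omega :: "real \<Rightarrow> real \<Rightarrow> real \<Rightarrow> real \<Rightarrow> real \<Rightarrow> real" where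
  "omega theta s nu t c =
     measure (coord_distr theta s nu)
       {p \<in> space (coord_distr theta s nu). t * snd p - c < fst p \<and> fst p < c - t * snd p}"

text \<open>Joint law of ((theta-hat_k, sigma-hat_k))_{k<K} when Sigma_1 = diag(s_0^2,...,s_{K-1}^2):
  theta-hat ~ N_K(theta, Sigma_1) has independent coordinates and the diagonal entries of a
  Wishart matrix W_K(Sigma_1, nu)/nu with diagonal Sigma_1 are independent scaled chi-square,
  independent of theta-hat.\<close>
definition joint_distr :: "nat \<Rightarrow> (nat \<Rightarrow> real) \<Rightarrow> (nat \<Rightarrow> real) \<Rightarrow> real \<Rightarrow> (nat \<Rightarrow> real \<times> real) measure" where
  "joint_distr K theta s nu = (\<Pi>\<^sub>M k\<in>{..<K}. coord_distr (theta k) (s k) nu)"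

definition omegaK :: "nat \<Rightarrow> (nat \<Rightarrow> real) \<Rightarrow> (nat \<Rightarrow> real) \<Rightarrow> real \<Rightarrow> (nat \<Rightarrow> real) \<Rightarrow> (nat \<Rightarrow> real) \<Rightarrow> real" where
  "omegaK K theta s nu t c =
     measure (joint_distr K theta s nu)
       {x \<in> space (joint_distr K theta s nu).
          \<forall>k<K. t k * snd (x k) - c k < fst (x k) \<and> fst (x k) < c k - t k * snd (x k)}"

definition A_K :: "nat \<Rightarrow> real \<Rightarrow> (nat \<Rightarrow> real) \<Rightarrow> real \<Rightarrow> real \<Rightarrow> ((nat \<Rightarrow> real) \<times> (nat \<Rightarrow> real)) set" where
  "A_K K c0 s nu alpha0 =
     {(t, c). (\<forall>k<K. 0 \<le> t k) \<and> (\<forall>k<K. 0 < c k) \<and>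
        (SUP theta\<in>{theta. \<exists>k<K. \<bar>theta k\<bar> \<ge> c0}. omegaK K theta s nu t c) = alpha0 \<and>
        (\<forall>j<K. \<forall>k<K. omega c0 (s j) nu (t j) (c j) = omega c0 (s k) nu (t k) (c k))}"

end

theory Submission
  imports Defs
begin

text \<open>With \<open>\<Sigma>\<^sub>1 = \<sigma>\<^sub>1\<^sup>2 I\<close> the coordinates are independent, so \<open>\<omega>\<^sub>K\<close> is the product of the
  univariate rejection probabilities; for \<open>t = 0\<close> these are the ball probabilities
  \<open>G(\<theta>, r) = P(|N(\<theta>, \<sigma>\<^sub>1\<^sup>2)| < r)\<close>. Let \<open>p\<^sub>k\<close>, \<open>p\<^sup>*\<^sub>k\<close> be the powers at 0 of coordinate \<open>k\<close>
  of a competitor \<open>(t, c)\<close> and of the cTOST, and \<open>a\<close>, \<open>b\<close> their common marginal sizes at \<open>c\<^sub>0\<close>.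
  The likelihood ratio of the symmetrised law \<open>N(\<plusminus>c\<^sub>0, \<sigma>\<^sub>1\<^sup>2)\<close> to \<open>N(0, \<sigma>\<^sub>1\<^sup>2)\<close> increases
  in \<open>|x|\<close>, so by the Neyman--Pearson argument \<open>r \<mapsto> G(0, r) - \<lambda> G(c\<^sub>0, r)\<close> is maximal at
  \<open>r = c\<^sup>*\<^sub>k\<close> for a suitable \<open>\<lambda> \<ge> 0\<close>; averaging over the variance estimate gives
  \<open>p\<^sub>k - \<lambda> a \<le> p\<^sup>*\<^sub>k - \<lambda> b\<close> and \<open>\<lambda> b \<le> p\<^sup>*\<^sub>k\<close>. If \<open>a \<le> b\<close> this gives \<open>p\<^sub>k \<le> p\<^sup>*\<^sub>k\<close> for every \<open>k\<close>.
  Otherwise it gives \<open>p\<^sub>k b \<le> p\<^sup>*\<^sub>k a\<close>, and the size constraints close the gap: \<open>\<alpha>\<^sub>0\<close> is at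
  least the competitor's rejection probability at \<open>\<theta> = c\<^sub>0 e\<^sub>k\<close>, which is \<open>a\<close> times the product
  of the \<open>p\<^sub>j\<close> with \<open>j \<noteq> k\<close>, and, since \<open>G(\<theta>, r)\<close> decreases in \<open>|\<theta>|\<close>, at most \<open>b\<close> times
  the product of the \<open>p\<^sup>*\<^sub>j\<close> with \<open>j \<noteq> k\<close>, for a suitable \<open>k\<close>.\<close>

lemma cosh_real_le_iff_abs_le: "cosh (u::real) \<le> cosh v \<longleftrightarrow> \<bar>u\<bar> \<le> \<bar>v\<bar>"
  by (metis abs_ge_zero cosh_real_abs cosh_real_nonneg_le_iff)

lemma cosh_mult_cosh_swap_le:
  fixes \<alpha> \<beta> x y :: real
  assumes "0 \<le> \<alpha>" "\<alpha> \<le> \<beta>" "\<bar>x\<bar> \<le> \<bar>y\<bar>"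
  shows "cosh (\<alpha> * y) * cosh (\<beta> * x) \<le> cosh (\<alpha> * x) * cosh (\<beta> * y)"
proof -
  have product_to_sum: "2 * (cosh u * cosh v) = cosh (u + v) + cosh (u - v)" for u v :: real
    by (simp add: cosh_add cosh_diff)
  have cosh_abs: "cosh (g * z) = cosh (g * \<bar>z\<bar>)" if "0 \<le> g" for g z :: real
    using that by (metis abs_mult abs_of_nonneg cosh_real_abs)
  define X Y where "X = \<bar>x\<bar>" and "Y = \<bar>y\<bar>"
  have "0 \<le> X" "X \<le> Y" "0 \<le> \<beta>"
    using assms by (auto simp: X_def Y_def)
  then have "0 \<le> (\<beta> - \<alpha>) * (Y - X)" "0 \<le> (\<beta> - \<alpha>) * (Y + X)" "0 \<le> (\<beta> + \<alpha>) * (Y - X)"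
      "0 \<le> \<alpha> * Y" "0 \<le> \<beta> * X"
    using assms by (auto intro!: mult_nonneg_nonneg)
  then have "\<bar>\<alpha> * Y + \<beta> * X\<bar> \<le> \<bar>\<alpha> * X + \<beta> * Y\<bar>" "\<bar>\<alpha> * Y - \<beta> * X\<bar> \<le> \<bar>\<alpha> * X - \<beta> * Y\<bar>"
    by (simp_all add: algebra_simps abs_le_iff)
  then have "2 * (cosh (\<alpha> * Y) * cosh (\<beta> * X)) \<le> 2 * (cosh (\<alpha> * X) * cosh (\<beta> * Y))"
    unfolding product_to_sum by (intro add_mono) (simp_all add: cosh_real_le_iff_abs_le)
  then show ?thesis
    using cosh_abs[OF assms(1)] cosh_abs[OF \<open>0 \<le> \<beta>\<close>] by (simp add: X_def Y_def)
qed

lemma sets_ball_real [measurable]: "ball (0::real) r \<in> sets borel"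
  by simp

lemma integral_ball_nonneg_single_crossing:
  fixes f :: "real \<Rightarrow> real"
  assumes f: "integrable lborel f" and total: "0 \<le> (\<integral>x. f x \<partial>lborel)"
    and crossing: "\<And>x y. \<bar>x\<bar> \<le> \<bar>y\<bar> \<Longrightarrow> 0 \<le> f y \<Longrightarrow> 0 \<le> f x"
  shows "0 \<le> (\<integral>x. f x * indicator (ball 0 r) x \<partial>lborel)"
proof (cases "\<exists>y. r \<le> \<bar>y\<bar> \<and> 0 \<le> f y")
  case True
  then obtain y where "r \<le> \<bar>y\<bar>" "0 \<le> f y" by blast
  then have "0 \<le> f x" if "\<bar>x\<bar> < r" for x
    using crossing[of x y] that by simp
  then show ?thesis
    by (intro integral_nonneg_AE AE_I2) (simp add: indicator_def)
next
  case False
  then have outside_neg: "f x * indicator (- ball 0 r) x \<le> 0" for x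
    by (auto simp: indicator_def not_le)
  have "(\<integral>x. f x * indicator (ball 0 r) x \<partial>lborel)
      = (\<integral>x. f x - f x * indicator (- ball 0 r) x \<partial>lborel)"
    by (intro Bochner_Integration.integral_cong) (auto simp: indicator_def)
  also have "\<dots> = (\<integral>x. f x \<partial>lborel) - (\<integral>x. f x * indicator (- ball 0 r) x \<partial>lborel)"
    by (rule Bochner_Integration.integral_diff) (auto intro!: integrable_real_mult_indicator f)
  moreover have "(\<integral>x. f x * indicator (- ball 0 r) x \<partial>lborel) \<le> 0"
    using integral_nonneg_AE[of "\<lambda>x. - (f x * indicator (- ball 0 r) x)"] outside_neg
    by simp
  ultimately show ?thesis
    using total by linarith
qed

lemma integral_ball_le_at_sign_change:
  fixes w :: "real \<Rightarrow> real"
  assumes w: "integrable lborel w"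
    and inside: "\<And>x. \<bar>x\<bar> < b \<Longrightarrow> 0 \<le> w x" and outside: "\<And>x. b \<le> \<bar>x\<bar> \<Longrightarrow> w x \<le> 0"
  shows "(\<integral>x. w x * indicator (ball 0 r) x \<partial>lborel) \<le> (\<integral>x. w x * indicator (ball 0 b) x \<partial>lborel)"
proof (rule Bochner_Integration.integral_mono)
  fix x
  show "w x * indicator (ball 0 r) x \<le> w x * indicator (ball 0 b) x"
    using inside[of x] outside[of x] by (auto simp: indicator_def not_less)
qed (auto intro: integrable_real_mult_indicator w)

section \<open>Ball probabilities of normal laws\<close>

definition normal_measure :: "real \<Rightarrow> real \<Rightarrow> real measure" where
  "normal_measure \<mu> \<sigma> = density lborel (\<lambda>x. ennreal (normal_density \<mu> \<sigma> x))"

definition normal_ball_prob :: "real \<Rightarrow> real \<Rightarrow> real \<Rightarrow> real" where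
  "normal_ball_prob \<mu> \<sigma> r = measure (normal_measure \<mu> \<sigma>) (ball 0 r)"

text \<open>The average of the \<open>N(a, \<sigma>\<^sup>2)\<close> and \<open>N(-a, \<sigma>\<^sup>2)\<close> densities, written so that its
  likelihood ratio to \<open>N(0, \<sigma>\<^sup>2)\<close>, a multiple of \<open>cosh (a x / \<sigma>\<^sup>2)\<close> and hence increasing
  in \<open>|x|\<close>, is visible.\<close>
definition sym_normal_density :: "real \<Rightarrow> real \<Rightarrow> real \<Rightarrow> real" where
  "sym_normal_density a \<sigma> x = normal_density 0 \<sigma> x * exp (- a\<^sup>2 / (2 * \<sigma>\<^sup>2)) * cosh (a / \<sigma>\<^sup>2 * x)"

lemma space_normal_measure [simp]: "space (normal_measure \<mu> \<sigma>) = UNIV"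
  by (simp add: normal_measure_def)

lemma sets_normal_measure [simp, measurable_cong]: "sets (normal_measure \<mu> \<sigma>) = sets borel"
  by (simp add: normal_measure_def)

lemma prob_space_normal_measure: "\<sigma> > 0 \<Longrightarrow> prob_space (normal_measure \<mu> \<sigma>)"
  unfolding normal_measure_def by (rule prob_space_normal_density)

lemma normal_ball_prob_nonneg: "0 \<le> normal_ball_prob \<mu> \<sigma> r"
  by (simp add: normal_ball_prob_def)

lemma normal_ball_prob_le_1: "\<sigma> > 0 \<Longrightarrow> normal_ball_prob \<mu> \<sigma> r \<le> 1"
  unfolding normal_ball_prob_def by (rule prob_space.prob_le_1[OF prob_space_normal_measure])

lemma mono_normal_ball_prob:
  assumes "\<sigma> > 0"
  shows "mono (normal_ball_prob \<mu> \<sigma>)"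
proof -
  interpret prob_space "normal_measure \<mu> \<sigma>"
    using prob_space_normal_measure[OF assms] .
  show ?thesis
    unfolding normal_ball_prob_def mono_def by (auto intro: finite_measure_mono)
qed

lemma borel_measurable_normal_ball_prob:
  "\<sigma> > 0 \<Longrightarrow> normal_ball_prob \<mu> \<sigma> \<in> borel_measurable borel"
  by (rule borel_measurable_mono[OF mono_normal_ball_prob])

lemma normal_ball_prob_eq_integral:
  assumes "\<sigma> > 0"
  shows "normal_ball_prob \<mu> \<sigma> r = (\<integral>x. normal_density \<mu> \<sigma> x * indicator (ball 0 r) x \<partial>lborel)"
proof -
  interpret prob_space "normal_measure \<mu> \<sigma>"
    using prob_space_normal_measure[OF assms] .
  have "normal_ball_prob \<mu> \<sigma> r = (\<integral>x. indicator (ball 0 r) x \<partial>normal_measure \<mu> \<sigma>)"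
    by (simp add: normal_ball_prob_def)
  also have "\<dots> = (\<integral>x. normal_density \<mu> \<sigma> x *\<^sub>R indicator (ball 0 r) x \<partial>lborel)"
    unfolding normal_measure_def by (rule integral_density) auto
  finally show ?thesis by simp
qed

lemma normal_ball_prob_uminus:
  assumes "\<sigma> > 0"
  shows "normal_ball_prob (- \<mu>) \<sigma> r = normal_ball_prob \<mu> \<sigma> r"
proof -
  have "normal_ball_prob (- \<mu>) \<sigma> r
      = \<bar>-1\<bar> *\<^sub>R (\<integral>x. normal_density (- \<mu>) \<sigma> (0 + (-1) * x) * indicator (ball 0 r) (0 + (-1) * x) \<partial>lborel)"
    unfolding normal_ball_prob_eq_integral[OF assms] by (rule lborel_integral_real_affine) simp
  also have "\<dots> = normal_ball_prob \<mu> \<sigma> r"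
    by (simp add: normal_ball_prob_eq_integral[OF assms] normal_density_def power2_commute
        add.commute indicator_def)
  finally show ?thesis .
qed

lemma sym_normal_density_eq:
  "sym_normal_density a \<sigma> x = (normal_density a \<sigma> x + normal_density (- a) \<sigma> x) / 2"
proof (cases "\<sigma> = 0")
  case True
  then show ?thesis by (simp add: sym_normal_density_def normal_density_def)
next
  case False
  have "exp (- (x - a)\<^sup>2 / (2 * \<sigma>\<^sup>2))
      = exp (- x\<^sup>2 / (2 * \<sigma>\<^sup>2)) * exp (- a\<^sup>2 / (2 * \<sigma>\<^sup>2)) * exp (a / \<sigma>\<^sup>2 * x)"
    "exp (- (x - - a)\<^sup>2 / (2 * \<sigma>\<^sup>2))
      = exp (- x\<^sup>2 / (2 * \<sigma>\<^sup>2)) * exp (- a\<^sup>2 / (2 * \<sigma>\<^sup>2)) * exp (- (a / \<sigma>\<^sup>2 * x))"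
    unfolding exp_add[symmetric] using False
    by (intro arg_cong[where f=exp]; simp add: field_simps power2_eq_square)+
  then show ?thesis
    unfolding sym_normal_density_def normal_density_def cosh_field_def
    by (simp add: algebra_simps add_divide_distrib)
qed

lemma integrable_sym_normal_density [simp]:
  "\<sigma> > 0 \<Longrightarrow> integrable lborel (sym_normal_density a \<sigma>)"
  unfolding sym_normal_density_eq[abs_def]
  by (intro integrable_divide_zero Bochner_Integration.integrable_add integrable_normal_density)

lemma sym_normal_density_zero [simp]: "sym_normal_density 0 \<sigma> = normal_density 0 \<sigma>"
  by (simp add: sym_normal_density_def fun_eq_iff)

lemma integral_sym_normal_density [simp]:
  assumes "\<sigma> > 0"
  shows "(\<integral>x. sym_normal_density a \<sigma> x \<partial>lborel) = 1"
  using assms by (simp add: sym_normal_density_eq Bochner_Integration.integral_add)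

lemma normal_ball_prob_eq_sym_integral:
  assumes "\<sigma> > 0"
  shows "normal_ball_prob a \<sigma> r = (\<integral>x. sym_normal_density a \<sigma> x * indicator (ball 0 r) x \<partial>lborel)"
proof -
  have "normal_ball_prob a \<sigma> r = (normal_ball_prob a \<sigma> r + normal_ball_prob (- a) \<sigma> r) / 2"
    by (simp add: normal_ball_prob_uminus[OF assms])
  also have "\<dots> = (\<integral>x. (normal_density a \<sigma> x * indicator (ball 0 r) x
      + normal_density (- a) \<sigma> x * indicator (ball 0 r) x) / 2 \<partial>lborel)"
    unfolding normal_ball_prob_eq_integral[OF assms]
    by (simp add: Bochner_Integration.integral_add integrable_real_mult_indicator assms)
  also have "\<dots> = (\<integral>x. sym_normal_density a \<sigma> x * indicator (ball 0 r) x \<partial>lborel)"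
    by (simp add: sym_normal_density_eq algebra_simps add_divide_distrib)
  finally show ?thesis .
qed

lemma normal_ball_prob_antimono:
  assumes \<sigma>: "\<sigma> > 0" and "0 \<le> a" "a \<le> \<bar>\<theta>\<bar>"
  shows "normal_ball_prob \<theta> \<sigma> r \<le> normal_ball_prob a \<sigma> r"
proof -
  define b where "b = \<bar>\<theta>\<bar>"
  have "normal_ball_prob \<theta> \<sigma> r = normal_ball_prob b \<sigma> r"
    using normal_ball_prob_uminus[OF \<sigma>, of \<theta>] by (cases "0 \<le> \<theta>") (auto simp: b_def)
  define Ea Eb where "Ea = exp (- a\<^sup>2 / (2 * \<sigma>\<^sup>2))" and "Eb = exp (- b\<^sup>2 / (2 * \<sigma>\<^sup>2))"
  define \<alpha> \<beta> where "\<alpha> = a / \<sigma>\<^sup>2" and "\<beta> = b / \<sigma>\<^sup>2"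
  define f where "f x = sym_normal_density a \<sigma> x - sym_normal_density b \<sigma> x" for x
  have f_eq: "f x = normal_density 0 \<sigma> x * (Ea * cosh (\<alpha> * x) - Eb * cosh (\<beta> * x))" for x
    by (simp add: f_def sym_normal_density_def Ea_def Eb_def \<alpha>_def \<beta>_def algebra_simps)
  have "0 \<le> \<alpha>" "\<alpha> \<le> \<beta>"
    using assms by (auto simp: \<alpha>_def \<beta>_def b_def divide_right_mono)
  have crossing: "0 \<le> f x" if "\<bar>x\<bar> \<le> \<bar>y\<bar>" "0 \<le> f y" for x y
  proof -
    have "Eb * cosh (\<beta> * y) \<le> Ea * cosh (\<alpha> * y)"
      using \<open>0 \<le> f y\<close> normal_density_pos[OF \<sigma>, of 0 y] by (simp add: f_eq zero_le_mult_iff)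
    have "(Eb * cosh (\<beta> * x)) * cosh (\<alpha> * y) \<le> Eb * (cosh (\<alpha> * x) * cosh (\<beta> * y))"
      using mult_left_mono[OF cosh_mult_cosh_swap_le[OF \<open>0 \<le> \<alpha>\<close> \<open>\<alpha> \<le> \<beta>\<close> that(1)], of Eb]
      by (simp add: Eb_def algebra_simps)
    also have "\<dots> = (Eb * cosh (\<beta> * y)) * cosh (\<alpha> * x)"
      by (simp add: algebra_simps)
    also have "\<dots> \<le> (Ea * cosh (\<alpha> * y)) * cosh (\<alpha> * x)"
      using \<open>Eb * cosh (\<beta> * y) \<le> Ea * cosh (\<alpha> * y)\<close> by (rule mult_right_mono) simp
    also have "\<dots> = (Ea * cosh (\<alpha> * x)) * cosh (\<alpha> * y)"
      by (simp add: algebra_simps)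
    finally have "Eb * cosh (\<beta> * x) \<le> Ea * cosh (\<alpha> * x)"
      by (rule mult_right_le_imp_le) simp
    then show ?thesis
      using normal_density_pos[OF \<sigma>, of 0 x] by (simp add: f_eq)
  qed
  have "0 \<le> (\<integral>x. f x * indicator (ball 0 r) x \<partial>lborel)"
    by (rule integral_ball_nonneg_single_crossing) (use \<sigma> crossing in \<open>auto simp: f_def\<close>)
  also have "\<dots> = normal_ball_prob a \<sigma> r - normal_ball_prob b \<sigma> r"
    unfolding f_def left_diff_distrib normal_ball_prob_eq_sym_integral[OF \<sigma>]
    by (rule Bochner_Integration.integral_diff) (auto intro!: integrable_real_mult_indicator simp: \<sigma>)
  finally show ?thesis
    using \<open>normal_ball_prob \<theta> \<sigma> r = normal_ball_prob b \<sigma> r\<close> by simp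
qed

lemma normal_ball_prob_neyman_pearson:
  fixes \<sigma> a b r :: real
  assumes \<sigma>: "\<sigma> > 0" and "0 \<le> b"
  defines "l \<equiv> exp (a\<^sup>2 / (2 * \<sigma>\<^sup>2)) / cosh (a * b / \<sigma>\<^sup>2)"
  shows "normal_ball_prob 0 \<sigma> r - l * normal_ball_prob a \<sigma> r
      \<le> normal_ball_prob 0 \<sigma> b - l * normal_ball_prob a \<sigma> b"
    and "l * normal_ball_prob a \<sigma> b \<le> normal_ball_prob 0 \<sigma> b"
proof -
  define k where "k = a / \<sigma>\<^sup>2"
  \<comment> \<open>\<open>l\<close> is chosen so that \<open>w\<close> changes sign exactly at \<open>|x| = b\<close>.\<close>
  define w where "w x = normal_density 0 \<sigma> x - l * sym_normal_density a \<sigma> x" for x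
  have w_eq: "w x = normal_density 0 \<sigma> x * (1 - cosh (k * x) / cosh (k * b))" for x
    by (simp add: w_def sym_normal_density_def l_def k_def exp_minus field_simps)
  have w_integral: "(\<integral>x. w x * indicator (ball 0 r) x \<partial>lborel)
      = normal_ball_prob 0 \<sigma> r - l * normal_ball_prob a \<sigma> r" for r
    unfolding w_def left_diff_distrib normal_ball_prob_eq_sym_integral[OF \<sigma>]
    by (subst Bochner_Integration.integral_diff)
       (auto intro!: integrable_real_mult_indicator simp: \<sigma> mult.assoc)
  have inside: "0 \<le> w x" if "\<bar>x\<bar> < b" for x
  proof -
    have "\<bar>k * x\<bar> \<le> \<bar>k * b\<bar>"
      using that \<open>0 \<le> b\<close> by (simp add: abs_mult mult_left_mono)
    then show ?thesis
      by (simp add: w_eq cosh_real_le_iff_abs_le[symmetric])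
  qed
  have outside: "w x \<le> 0" if "b \<le> \<bar>x\<bar>" for x
  proof -
    have "\<bar>k * b\<bar> \<le> \<bar>k * x\<bar>"
      using that \<open>0 \<le> b\<close> by (simp add: abs_mult mult_left_mono)
    then show ?thesis
      by (simp add: w_eq cosh_real_le_iff_abs_le[symmetric] mult_nonneg_nonpos)
  qed
  have "integrable lborel w"
    unfolding w_def using \<sigma> by auto
  from integral_ball_le_at_sign_change[OF this inside outside]
  show "normal_ball_prob 0 \<sigma> r - l * normal_ball_prob a \<sigma> r
      \<le> normal_ball_prob 0 \<sigma> b - l * normal_ball_prob a \<sigma> b"
    by (simp add: w_integral)
  have "0 \<le> (\<integral>x. w x * indicator (ball 0 b) x \<partial>lborel)"
    using inside by (intro integral_nonneg_AE AE_I2) (simp add: indicator_def)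
  then show "l * normal_ball_prob a \<sigma> b \<le> normal_ball_prob 0 \<sigma> b"
    by (simp add: w_integral)
qed

section \<open>Rejection probabilities\<close>

lemma borel_measurable_chisq_density [measurable]: "chisq_density \<nu> \<in> borel_measurable borel"
  unfolding chisq_density_def by measurable

lemma chisq_density_rescaled:
  assumes "\<nu> > 0"
  shows "2 * chisq_density \<nu> (2 * u)
    = indicator {0..} u * u powr (\<nu> / 2 - 1) / exp u / Gamma (\<nu> / 2)"
proof (cases "u > 0")
  case True
  have "2 * chisq_density \<nu> (2 * u)
      = (2 * (2 * u) powr (\<nu> / 2 - 1)) * exp (- u) / (2 powr (\<nu> / 2) * Gamma (\<nu> / 2))"
    using True by (simp add: chisq_density_def)
  also have "2 * (2 * u) powr (\<nu> / 2 - 1) = 2 powr (\<nu> / 2) * u powr (\<nu> / 2 - 1)"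
    using True by (simp add: powr_mult powr_diff)
  finally show ?thesis
    using True by (simp add: exp_minus field_simps)
qed (auto simp: chisq_density_def indicator_def)

lemma nn_integral_chisq_density:
  assumes "\<nu> > 0"
  shows "(\<integral>\<^sup>+x. ennreal (chisq_density \<nu> x) \<partial>lborel) = 1"
proof -
  have Gamma_pos: "Gamma (\<nu> / 2) > 0"
    using assms by (simp add: Gamma_real_pos)
  have "(\<integral>\<^sup>+x. ennreal (chisq_density \<nu> x) \<partial>lborel)
      = ennreal 2 * (\<integral>\<^sup>+u. ennreal (chisq_density \<nu> (2 * u)) \<partial>lborel)"
    using nn_integral_real_affine[of "\<lambda>x. ennreal (chisq_density \<nu> x)" 2 0] by simp
  also have "\<dots> = (\<integral>\<^sup>+u. ennreal 2 * ennreal (chisq_density \<nu> (2 * u)) \<partial>lborel)"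
    by (rule nn_integral_cmult[symmetric]) measurable
  also have "\<dots> = (\<integral>\<^sup>+u. ennreal (2 * chisq_density \<nu> (2 * u)) \<partial>lborel)"
    by (simp add: ennreal_mult')
  also have "\<dots> = (\<integral>\<^sup>+u. ennreal (indicator {0..} u * u powr (\<nu> / 2 - 1) / exp u)
      * ennreal (1 / Gamma (\<nu> / 2)) \<partial>lborel)"
    using Gamma_pos by (intro nn_integral_cong)
      (simp add: chisq_density_rescaled[OF assms] ennreal_mult'[symmetric])
  also have "\<dots> = ennreal (Gamma (\<nu> / 2)) * ennreal (1 / Gamma (\<nu> / 2))"
    using Gamma_conv_nn_integral_real[of "\<nu> / 2"] assms by (simp add: nn_integral_multc)
  also have "\<dots> = 1"
    using Gamma_pos by (simp add: ennreal_mult'[symmetric])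
  finally show ?thesis .
qed

lemma space_sigma_hat_distr [simp]: "space (sigma_hat_distr s \<nu>) = UNIV"
  by (simp add: sigma_hat_distr_def)

lemma sets_sigma_hat_distr [simp, measurable_cong]: "sets (sigma_hat_distr s \<nu>) = sets borel"
  by (simp add: sigma_hat_distr_def)

lemma prob_space_sigma_hat_distr:
  assumes "\<nu> > 0"
  shows "prob_space (sigma_hat_distr s \<nu>)"
proof -
  have "prob_space (density lborel (\<lambda>x. ennreal (chisq_density \<nu> x)))"
    by (rule prob_spaceI) (simp add: emeasure_density nn_integral_chisq_density[OF assms])
  then show ?thesis
    unfolding sigma_hat_distr_def by (rule prob_space.prob_space_distr) simp
qed

lemma coord_distr_eq_pair: "coord_distr \<theta> s \<nu> = normal_measure \<theta> s \<Otimes>\<^sub>M sigma_hat_distr s \<nu>"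
  by (simp add: coord_distr_def normal_measure_def)

lemma prob_space_coord_distr: "s > 0 \<Longrightarrow> \<nu> > 0 \<Longrightarrow> prob_space (coord_distr \<theta> s \<nu>)"
  unfolding coord_distr_eq_pair
  by (intro prob_space_pair prob_space_normal_measure prob_space_sigma_hat_distr)

lemma omega_le_1: "s > 0 \<Longrightarrow> \<nu> > 0 \<Longrightarrow> omega \<theta> s \<nu> t c \<le> 1"
  unfolding omega_def by (rule prob_space.prob_le_1[OF prob_space_coord_distr])

lemma integrable_normal_ball_prob_affine:
  assumes "s > 0" and "prob_space M" and sets_M: "sets M = sets borel"
  shows "integrable M (\<lambda>y. normal_ball_prob \<mu> s (c - t * y))"
proof -
  interpret prob_space M by fact
  have [measurable]: "normal_ball_prob \<mu> s \<in> borel_measurable borel"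
    by (rule borel_measurable_normal_ball_prob) fact
  have [measurable_cong]: "sets M = sets borel" by (fact sets_M)
  show ?thesis
    by (rule integrable_const_bound[where B=1])
       (simp_all add: normal_ball_prob_nonneg normal_ball_prob_le_1 \<open>s > 0\<close>)
qed

lemma omega_eq_integral:
  assumes s: "s > 0" and \<nu>: "\<nu> > 0"
  shows "omega \<theta> s \<nu> t c = (\<integral>y. normal_ball_prob \<theta> s (c - t * y) \<partial>sigma_hat_distr s \<nu>)"
proof -
  let ?N = "normal_measure \<theta> s" and ?S = "sigma_hat_distr s \<nu>"
  interpret N: prob_space ?N by (rule prob_space_normal_measure[OF s])
  interpret S: prob_space ?S by (rule prob_space_sigma_hat_distr[OF \<nu>])
  interpret pair_prob_space ?N ?S ..
  define E where "E = {p \<in> space (?N \<Otimes>\<^sub>M ?S). t * snd p - c < fst p \<and> fst p < c - t * snd p}"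
  have E: "E \<in> sets (?N \<Otimes>\<^sub>M ?S)"
    unfolding E_def by measurable
  have slice: "(\<lambda>x. (x, y)) -` E = ball 0 (c - t * y)" for y
    unfolding set_eq_iff mem_ball dist_real_def by (auto simp: E_def space_pair_measure)
  have integrable: "integrable ?S (\<lambda>y. normal_ball_prob \<theta> s (c - t * y))"
    by (rule integrable_normal_ball_prob_affine[OF s S.prob_space_axioms]) simp
  have "omega \<theta> s \<nu> t c = enn2real (emeasure (?N \<Otimes>\<^sub>M ?S) E)"
    by (simp add: omega_def coord_distr_eq_pair E_def measure_def)
  also have "emeasure (?N \<Otimes>\<^sub>M ?S) E = (\<integral>\<^sup>+y. ennreal (normal_ball_prob \<theta> s (c - t * y)) \<partial>?S)"
    using emeasure_pair_measure_alt2[OF E]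
    by (simp add: slice normal_ball_prob_def N.emeasure_eq_measure)
  also have "\<dots> = ennreal (\<integral>y. normal_ball_prob \<theta> s (c - t * y) \<partial>?S)"
    by (rule nn_integral_eq_integral[OF integrable]) (simp add: normal_ball_prob_nonneg)
  also have "enn2real \<dots> = (\<integral>y. normal_ball_prob \<theta> s (c - t * y) \<partial>?S)"
    by (simp add: integral_nonneg_AE normal_ball_prob_nonneg)
  finally show ?thesis .
qed

lemma omega_t_zero:
  assumes "s > 0" "\<nu> > 0"
  shows "omega \<theta> s \<nu> 0 c = normal_ball_prob \<theta> s c"
proof -
  interpret prob_space "sigma_hat_distr s \<nu>"
    by (rule prob_space_sigma_hat_distr) fact
  show ?thesis
    by (simp add: omega_eq_integral[OF assms] prob_space[unfolded space_sigma_hat_distr])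
qed

lemma omega_neyman_pearson:
  fixes s a b t c :: real
  assumes s: "s > 0" and \<nu>: "\<nu> > 0" and "0 \<le> b"
  shows "\<exists>l\<ge>0. omega 0 s \<nu> t c - l * omega a s \<nu> t c
      \<le> normal_ball_prob 0 s b - l * normal_ball_prob a s b
      \<and> l * normal_ball_prob a s b \<le> normal_ball_prob 0 s b"
proof -
  let ?S = "sigma_hat_distr s \<nu>"
  interpret S: prob_space ?S by (rule prob_space_sigma_hat_distr[OF \<nu>])
  define l where "l = exp (a\<^sup>2 / (2 * s\<^sup>2)) / cosh (a * b / s\<^sup>2)"
  have integrable: "integrable ?S (\<lambda>y. normal_ball_prob \<mu> s (c - t * y))" for \<mu>
    by (rule integrable_normal_ball_prob_affine[OF s S.prob_space_axioms]) simp
  have "omega 0 s \<nu> t c - l * omega a s \<nu> t c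
      = (\<integral>y. normal_ball_prob 0 s (c - t * y) - l * normal_ball_prob a s (c - t * y) \<partial>?S)"
    by (simp add: omega_eq_integral[OF s \<nu>] integrable)
  also have "\<dots> \<le> (\<integral>y. normal_ball_prob 0 s b - l * normal_ball_prob a s b \<partial>?S)"
    using normal_ball_prob_neyman_pearson(1)[OF s \<open>0 \<le> b\<close>, where a=a, folded l_def]
    by (intro Bochner_Integration.integral_mono) (auto simp: integrable)
  also have "\<dots> = normal_ball_prob 0 s b - l * normal_ball_prob a s b"
    by (simp add: S.prob_space[unfolded space_sigma_hat_distr])
  finally show ?thesis
    using normal_ball_prob_neyman_pearson(2)[OF s \<open>0 \<le> b\<close>, where a=a, folded l_def]
    by (intro exI[of _ l]) (simp add: l_def)
qed

lemma omegaK_eq_prod: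
  assumes s: "s > 0" and \<nu>: "\<nu> > 0"
  shows "omegaK K \<theta> (\<lambda>k. s) \<nu> t c = (\<Prod>k<K. omega (\<theta> k) s \<nu> (t k) (c k))"
proof -
  define M where "M k = coord_distr (\<theta> k) s \<nu>" for k
  have prob_M: "prob_space (M k)" for k
    unfolding M_def by (rule prob_space_coord_distr[OF s \<nu>])
  interpret product_prob_space M
    by (rule product_prob_spaceI) (rule prob_M)
  have space_M: "space (M k) = UNIV" for k
    by (simp add: M_def coord_distr_def space_pair_measure)
  define A where "A k = {p. t k * snd p - c k < fst p \<and> fst p < c k - t k * snd p}" for k
  have A: "A k \<in> sets (M k)" for k
  proof -
    have [measurable_cong]: "sets (M k) = sets (borel \<Otimes>\<^sub>M borel)"
      unfolding M_def coord_distr_eq_pair by (rule sets_pair_measure_cong) simp_all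
    have "{p \<in> space (M k). t k * snd p - c k < fst p \<and> fst p < c k - t k * snd p} \<in> sets (M k)"
      by measurable
    then show ?thesis
      by (simp add: A_def space_M)
  qed
  have "omegaK K \<theta> (\<lambda>k. s) \<nu> t c = measure (Pi\<^sub>M {..<K} M) (Pi\<^sub>E {..<K} A)"
    unfolding omegaK_def joint_distr_def M_def[symmetric]
    by (intro arg_cong[where f="measure _"]) (auto simp: space_PiM space_M A_def PiE_def Pi_def)
  also have "\<dots> = enn2real (\<Prod>k<K. emeasure (M k) (A k))"
    by (simp add: measure_def emeasure_PiM A)
  also have "\<dots> = (\<Prod>k<K. measure (M k) (A k))"
    by (simp add: M.emeasure_eq_measure prod_ennreal prod_nonneg)
  also have "\<dots> = (\<Prod>k<K. omega (\<theta> k) s \<nu> (t k) (c k))"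
    by (simp add: omega_def M_def A_def space_M[unfolded M_def])
  finally show ?thesis .
qed

section \<open>Size constraints and power\<close>

lemma omega_nonneg [simp]: "0 \<le> omega \<theta> s \<nu> t c"
  by (simp add: omega_def)

lemma mem_A_KD:
  assumes "(t, c) \<in> A_K K c0 s \<nu> \<alpha>"
  shows "k < K \<Longrightarrow> 0 < c k"
    and "(SUP \<theta>\<in>{\<theta>. \<exists>k<K. c0 \<le> \<bar>\<theta> k\<bar>}. omegaK K \<theta> s \<nu> t c) = \<alpha>"
    and "j < K \<Longrightarrow> k < K \<Longrightarrow> omega c0 (s j) \<nu> (t j) (c j) = omega c0 (s k) \<nu> (t k) (c k)"
  using assms unfolding A_K_def mem_Collect_eq case_prod_conv by blast+

lemma omegaK_le_1:
  assumes "s > 0" "\<nu> > 0"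
  shows "omegaK K \<theta> (\<lambda>_. s) \<nu> t c \<le> 1"
  unfolding omegaK_eq_prod[OF assms] by (rule prod_le_1) (simp add: omega_le_1[OF assms])

lemma A_K_axis_rejection_le_size:
  assumes s: "s > 0" and \<nu>: "\<nu> > 0" and tc: "(t, c) \<in> A_K K c0 (\<lambda>_. s) \<nu> \<alpha>" and "k < K"
  shows "omega c0 s \<nu> (t k) (c k) * (\<Prod>j\<in>{..<K} - {k}. omega 0 s \<nu> (t j) (c j)) \<le> \<alpha>"
proof -
  define \<theta> where "\<theta> j = (if j = k then c0 else 0)" for j
  have "omega c0 s \<nu> (t k) (c k) * (\<Prod>j\<in>{..<K} - {k}. omega 0 s \<nu> (t j) (c j))
      = omega (\<theta> k) s \<nu> (t k) (c k) * (\<Prod>j\<in>{..<K} - {k}. omega (\<theta> j) s \<nu> (t j) (c j))"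
    by (intro arg_cong2[where f="(*)"] prod.cong) (simp_all add: \<theta>_def)
  also have "\<dots> = (\<Prod>j<K. omega (\<theta> j) s \<nu> (t j) (c j))"
    by (rule prod.remove[symmetric]) (simp_all add: \<open>k < K\<close>)
  also have "\<dots> = omegaK K \<theta> (\<lambda>_. s) \<nu> t c"
    by (rule omegaK_eq_prod[OF s \<nu>, symmetric])
  also have "\<dots> \<le> (SUP \<theta>\<in>{\<theta>. \<exists>k<K. c0 \<le> \<bar>\<theta> k\<bar>}. omegaK K \<theta> (\<lambda>_. s) \<nu> t c)"
  proof (rule cSUP_upper)
    show "\<theta> \<in> {\<theta>. \<exists>k<K. c0 \<le> \<bar>\<theta> k\<bar>}"
      using \<open>k < K\<close> by (auto simp: \<theta>_def)
    show "bdd_above ((\<lambda>\<theta>. omegaK K \<theta> (\<lambda>_. s) \<nu> t c) ` {\<theta>. \<exists>k<K. c0 \<le> \<bar>\<theta> k\<bar>})"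
      by (rule bdd_aboveI2) (rule omegaK_le_1[OF s \<nu>])
  qed
  also have "\<dots> = \<alpha>"
    by (rule mem_A_KD(2)[OF tc])
  finally show ?thesis .
qed

lemma cTOST_size_le_axis_bound:
  assumes s: "s > 0" and \<nu>: "\<nu> > 0" and "0 \<le> c0" "0 < K"
  shows "\<exists>k<K. (SUP \<theta>\<in>{\<theta>. \<exists>k<K. c0 \<le> \<bar>\<theta> k\<bar>}. omegaK K \<theta> (\<lambda>_. s) \<nu> (\<lambda>_. 0) r)
      \<le> normal_ball_prob c0 s (r k) * (\<Prod>j\<in>{..<K} - {k}. normal_ball_prob 0 s (r j))"
proof -
  define B where "B i = normal_ball_prob c0 s (r i) * (\<Prod>j\<in>{..<K} - {i}. normal_ball_prob 0 s (r j))" for i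
  have "Max (B ` {..<K}) \<in> B ` {..<K}"
    using \<open>0 < K\<close> by (intro Max_in) auto
  then obtain k where "k < K" and k_max: "B k = Max (B ` {..<K})"
    by auto
  have "(SUP \<theta>\<in>{\<theta>. \<exists>k<K. c0 \<le> \<bar>\<theta> k\<bar>}. omegaK K \<theta> (\<lambda>_. s) \<nu> (\<lambda>_. 0) r) \<le> B k"
  proof (rule cSUP_least)
    show "{\<theta>. \<exists>k<K. c0 \<le> \<bar>\<theta> k\<bar>} \<noteq> {}"
      using \<open>0 < K\<close> \<open>0 \<le> c0\<close> by (auto intro!: exI[of _ "\<lambda>_. c0"])
  next
    fix \<theta> assume "\<theta> \<in> {\<theta>. \<exists>k<K. c0 \<le> \<bar>\<theta> k\<bar>}"
    then obtain i where "i < K" "c0 \<le> \<bar>\<theta> i\<bar>" by auto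
    have "omegaK K \<theta> (\<lambda>_. s) \<nu> (\<lambda>_. 0) r
        = normal_ball_prob (\<theta> i) s (r i) * (\<Prod>j\<in>{..<K} - {i}. normal_ball_prob (\<theta> j) s (r j))"
      using \<open>i < K\<close> by (simp add: omegaK_eq_prod[OF s \<nu>] omega_t_zero[OF s \<nu>] prod.remove[of "{..<K}" i])
    also have "\<dots> \<le> B i"
      unfolding B_def
      using normal_ball_prob_antimono[OF s \<open>0 \<le> c0\<close> \<open>c0 \<le> \<bar>\<theta> i\<bar>\<close>]
        normal_ball_prob_antimono[OF s order_refl abs_ge_zero]
      by (intro mult_mono prod_mono prod_nonneg) (auto simp: normal_ball_prob_nonneg)
    also have "\<dots> \<le> B k"
      unfolding k_max using \<open>i < K\<close> by (intro Max_ge) auto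
    finally show "omegaK K \<theta> (\<lambda>_. s) \<nu> (\<lambda>_. 0) r \<le> B k" .
  qed
  then show ?thesis
    using \<open>k < K\<close> by (auto simp: B_def)
qed

lemma neyman_pearson_bound_le:
  fixes p q a b l :: real
  assumes "0 \<le> l" and "p - l * a \<le> q - l * b"
  shows "a \<le> b \<Longrightarrow> p \<le> q"
    and "0 \<le> b \<Longrightarrow> b \<le> a \<Longrightarrow> l * b \<le> q \<Longrightarrow> p * b \<le> q * a"
proof -
  show "p \<le> q" if "a \<le> b"
    using assms(2) mult_left_mono[OF that assms(1)] by linarith
  show "p * b \<le> q * a" if "0 \<le> b" "b \<le> a" "l * b \<le> q"
  proof -
    have "p * b \<le> (q + l * (a - b)) * b"
      using assms(2) \<open>0 \<le> b\<close> by (intro mult_right_mono) (auto simp: algebra_simps)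
    also have "\<dots> = q * b + (l * b) * (a - b)"
      by (simp add: algebra_simps)
    also have "\<dots> \<le> q * b + q * (a - b)"
      using that by (intro add_left_mono mult_right_mono) auto
    also have "\<dots> = q * a"
      by (simp add: algebra_simps)
    finally show ?thesis .
  qed
qed

text \<open>In the application \<open>p j\<close> and \<open>q j\<close> are the powers at 0 of coordinate \<open>j\<close> of a competitor
  and of the cTOST, \<open>a\<close> and \<open>b\<close> their common marginal sizes at \<open>c\<^sub>0\<close>; \<open>lower\<close> and \<open>upper\<close>
  are the two size constraints.\<close>
lemma prod_le_prod_under_size_constraints:
  fixes p q :: "'i \<Rightarrow> real" and a b \<alpha> :: real
  assumes "finite I" "k \<in> I" "0 \<le> b" "0 < \<alpha>"
    and p_nonneg: "\<And>j. j \<in> I \<Longrightarrow> 0 \<le> p j"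
    and np_bound: "\<And>j. j \<in> I \<Longrightarrow> \<exists>l\<ge>0. p j - l * a \<le> q j - l * b \<and> l * b \<le> q j"
    and lower: "a * (\<Prod>j\<in>I - {k}. p j) \<le> \<alpha>"
    and upper: "\<alpha> \<le> b * (\<Prod>j\<in>I - {k}. q j)"
  shows "(\<Prod>j\<in>I. p j) \<le> (\<Prod>j\<in>I. q j)"
proof (cases "a \<le> b")
  case True
  have "p j \<le> q j" if j: "j \<in> I" for j
    using np_bound[OF j] neyman_pearson_bound_le(1)[OF _ _ True] by blast
  then show ?thesis
    by (intro prod_mono) (simp add: p_nonneg)
next
  case False
  define P Q where "P = (\<Prod>j\<in>I - {k}. p j)" and "Q = (\<Prod>j\<in>I - {k}. q j)"
  have q_nonneg: "0 \<le> q j" if j: "j \<in> I" for j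
    using np_bound[OF j] \<open>0 \<le> b\<close> by (metis mult_nonneg_nonneg order_trans)
  have "0 < b"
    using upper \<open>0 \<le> b\<close> \<open>0 < \<alpha>\<close> by (cases "b = 0") auto
  with False have "0 < a" by simp
  obtain l where "0 \<le> l" "p k - l * a \<le> q k - l * b" "l * b \<le> q k"
    using np_bound[OF \<open>k \<in> I\<close>] by blast
  with \<open>0 \<le> b\<close> False have "p k * b \<le> q k * a"
    by (intro neyman_pearson_bound_le(2)) auto
  have "(p k * P) * a \<le> (q k * Q) * a"
  proof -
    have "(p k * P) * a = p k * (a * P)"
      by (simp add: algebra_simps)
    also have "\<dots> \<le> p k * (b * Q)"
      using lower upper p_nonneg[OF \<open>k \<in> I\<close>] by (intro mult_left_mono) (simp_all add: P_def Q_def)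
    also have "\<dots> = (p k * b) * Q"
      by (simp add: algebra_simps)
    also have "\<dots> \<le> (q k * a) * Q"
      using \<open>p k * b \<le> q k * a\<close> by (intro mult_right_mono) (auto simp: Q_def intro!: prod_nonneg q_nonneg)
    finally show ?thesis
      by (simp add: algebra_simps)
  qed
  then have "p k * P \<le> q k * Q"
    using \<open>0 < a\<close> by simp
  then show ?thesis
    by (simp add: P_def Q_def prod.remove[OF \<open>finite I\<close> \<open>k \<in> I\<close>])
qed

theorem proposition2:
  fixes K :: nat and c0 alpha0 nu2 sigma1 :: real
    and t c cstar :: "nat \<Rightarrow> real"
  assumes "K \<ge> 2" and "c0 > 0" and "0 < alpha0" and "alpha0 < 1/2"
    and "nu2 > 0" and "sigma1 > 0"
    and "(t, c) \<in> A_K K c0 (\<lambda>k. sigma1) nu2 alpha0"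
    and "((\<lambda>k. 0), cstar) \<in> A_K K c0 (\<lambda>k. sigma1) nu2 alpha0"
  shows "omegaK K (\<lambda>k. 0) (\<lambda>k. sigma1) nu2 t c
         \<le> omegaK K (\<lambda>k. 0) (\<lambda>k. sigma1) nu2 (\<lambda>k. 0) cstar"
proof -
  note s = \<open>sigma1 > 0\<close> and \<nu> = \<open>nu2 > 0\<close> and tc = assms(7) and cTOST = assms(8)
  obtain k where "k < K" and upper: "alpha0 \<le> normal_ball_prob c0 sigma1 (cstar k)
      * (\<Prod>j\<in>{..<K} - {k}. normal_ball_prob 0 sigma1 (cstar j))"
    using cTOST_size_le_axis_bound[OF s \<nu>, of c0 K cstar] mem_A_KD(2)[OF cTOST] assms(1,2) by auto
  define a b where "a = omega c0 sigma1 nu2 (t k) (c k)" and "b = normal_ball_prob c0 sigma1 (cstar k)"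
  have np_bound: "\<exists>l\<ge>0. omega 0 sigma1 nu2 (t j) (c j) - l * a \<le> normal_ball_prob 0 sigma1 (cstar j) - l * b
      \<and> l * b \<le> normal_ball_prob 0 sigma1 (cstar j)" if "j < K" for j
  proof -
    have "0 \<le> cstar j"
      using mem_A_KD(1)[OF cTOST that] by simp
    have equal_sizes: "a = omega c0 sigma1 nu2 (t j) (c j)" "b = normal_ball_prob c0 sigma1 (cstar j)"
      using mem_A_KD(3)[OF tc that \<open>k < K\<close>] mem_A_KD(3)[OF cTOST that \<open>k < K\<close>]
      by (simp_all add: a_def b_def omega_t_zero[OF s \<nu>])
    show ?thesis
      unfolding equal_sizes by (rule omega_neyman_pearson[OF s \<nu> \<open>0 \<le> cstar j\<close>])
  qed
  have "(\<Prod>j<K. omega 0 sigma1 nu2 (t j) (c j)) \<le> (\<Prod>j<K. normal_ball_prob 0 sigma1 (cstar j))"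
  proof (rule prod_le_prod_under_size_constraints[where k=k and a=a and b=b and \<alpha>=alpha0])
    show "a * (\<Prod>j\<in>{..<K} - {k}. omega 0 sigma1 nu2 (t j) (c j)) \<le> alpha0"
      unfolding a_def by (rule A_K_axis_rejection_le_size[OF s \<nu> tc \<open>k < K\<close>])
    show "alpha0 \<le> b * (\<Prod>j\<in>{..<K} - {k}. normal_ball_prob 0 sigma1 (cstar j))"
      unfolding b_def by (rule upper)
    show "0 \<le> b"
      unfolding b_def by (rule normal_ball_prob_nonneg)
  qed (use \<open>k < K\<close> \<open>0 < alpha0\<close> np_bound in auto)
  then show ?thesis
    by (simp add: omegaK_eq_prod[OF s \<nu>] omega_t_zero[OF s \<nu>])
qed

end
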